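(* Let $X$ be a locally compact Hausdorff space. If $X$ contains an open dense $\sigma$-compact set and $C_0(X)$ has the countable sup property, then $X$ is CCC.
   Context: $C_0(X)$ is the vector lattice (pointwise order) of continuous real-valued functions on $X$ vanishing at infinity. A vector lattice has the countable sup property if every nonempty subset possessing a supremum contains a countable subset with the same supremum. $X$ is CCC if every family of pairwise disjoint open subsets of $X$ is countable. *)

theory Defs
  imports "HOL-Analysis.Analysis"
begin

text \<open>Functions are taken extensional (zero outside topspace X) so that each element
  of C_0(X) is represented uniquely.\<close>
definition C0 :: "'a topology \<Rightarrow> ('a \<Rightarrow> real) set" where
  "C0 X = {f. continuous_map X euclideanreal f
              \<and> (\<forall>e>0. compactin X {x \<in> topspace X. \<bar>f x\<bar> \<ge> e})
              \<and> (\<forall>x. x \<notin> topspace X \<longrightarrow> f x = 0)}"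

definition C0_le :: "'a topology \<Rightarrow> ('a \<Rightarrow> real) \<Rightarrow> ('a \<Rightarrow> real) \<Rightarrow> bool" where
  "C0_le X f g \<longleftrightarrow> (\<forall>x\<in>topspace X. f x \<le> g x)"

definition C0_is_sup :: "'a topology \<Rightarrow> ('a \<Rightarrow> real) set \<Rightarrow> ('a \<Rightarrow> real) \<Rightarrow> bool" where
  "C0_is_sup X S g \<longleftrightarrow> g \<in> C0 X \<and> (\<forall>f\<in>S. C0_le X f g)
     \<and> (\<forall>h\<in>C0 X. (\<forall>f\<in>S. C0_le X f h) \<longrightarrow> C0_le X g h)"

definition countable_sup_property_C0 :: "'a topology \<Rightarrow> bool" where
  "countable_sup_property_C0 X \<longleftrightarrow>
     (\<forall>S g. S \<subseteq> C0 X \<and> S \<noteq> {} \<and> C0_is_sup X S g \<longrightarrow>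
        (\<exists>T\<subseteq>S. countable T \<and> C0_is_sup X T g))"

definition CCC_space :: "'a topology \<Rightarrow> bool" where
  "CCC_space X \<longleftrightarrow>
     (\<forall>F. (\<forall>U\<in>F. openin X U) \<and> pairwise disjnt F \<longrightarrow> countable F)"

definition sigma_compactin :: "'a topology \<Rightarrow> 'a set \<Rightarrow> bool" where
  "sigma_compactin X U \<longleftrightarrow> (\<exists>K :: nat \<Rightarrow> 'a set. (\<forall>n. compactin X (K n)) \<and> U = (\<Union>n. K n))"

end

theory Submission
  imports Defs
begin

text \<open>Suppose F is an uncountable disjoint family of open sets. Since a dense \<sigma>-compact set
  meets every nonempty open set, some compact K meets uncountably many members of F. Take
  \<phi> \<in> C_0(X) with 0 \<le> \<phi> \<le> 1 and \<phi> = 1 on K, and enlarge F by the complement of the closure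
  of its union to a disjoint open family G with dense union. Then \<phi> is the supremum of the
  functions f \<le> \<phi> in C_0(X) that vanish outside a single member of G. A countable subfamily
  only involves countably many members of G, so it misses some member W meeting K; cutting \<phi>
  down by an Urysohn function supported in W at a point of K \<inter> W gives a smaller upper bound
  of the subfamily, so the subfamily does not have supremum \<phi>.\<close>

lemma closedin_abs_ge:
  assumes "continuous_map X euclideanreal f"
  shows "closedin X {x \<in> topspace X. e \<le> \<bar>f x\<bar>}"
  using continuous_map_real_abs[OF assms]
  unfolding continuous_map_upper_lower_semicontinuous_le by blast

lemma C0_zero: "(\<lambda>x. 0) \<in> C0 X"
  by (simp add: C0_def)

lemma C0_mult_bounded:
  assumes \<phi>: "\<phi> \<in> C0 X" and \<psi>: "continuous_map X euclideanreal \<psi>"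
    and bound: "\<And>x. x \<in> topspace X \<Longrightarrow> \<bar>\<psi> x\<bar> \<le> 1"
  shows "(\<lambda>x. \<phi> x * \<psi> x) \<in> C0 X"
proof -
  have cont: "continuous_map X euclideanreal (\<lambda>x. \<phi> x * \<psi> x)"
    using \<phi> \<psi> by (intro continuous_map_real_mult) (simp_all add: C0_def)
  have "compactin X {x \<in> topspace X. e \<le> \<bar>\<phi> x * \<psi> x\<bar>}" if "e > 0" for e
  proof (rule closed_compactin)
    show "compactin X {x \<in> topspace X. e \<le> \<bar>\<phi> x\<bar>}"
      using \<phi> that by (simp add: C0_def)
    show "{x \<in> topspace X. e \<le> \<bar>\<phi> x * \<psi> x\<bar>} \<subseteq> {x \<in> topspace X. e \<le> \<bar>\<phi> x\<bar>}"
    proof clarify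
      fix x assume x: "x \<in> topspace X" "e \<le> \<bar>\<phi> x * \<psi> x\<bar>"
      then have "\<bar>\<phi> x * \<psi> x\<bar> \<le> \<bar>\<phi> x\<bar>"
        using bound by (simp add: abs_mult mult_left_le)
      with x show "e \<le> \<bar>\<phi> x\<bar>" by linarith
    qed
  qed (rule closedin_abs_ge[OF cont])
  then show ?thesis
    using cont \<phi> by (simp add: C0_def)
qed

lemma completely_regular_Urysohn_cutoff:
  assumes "completely_regular_space X" "compactin X K" "openin X W" "K \<subseteq> W"
  obtains \<psi> where "continuous_map X euclideanreal \<psi>"
    "\<And>x. x \<in> topspace X \<Longrightarrow> 0 \<le> \<psi> x \<and> \<psi> x \<le> 1"
    "\<And>x. x \<in> K \<Longrightarrow> \<psi> x = 1"
    "\<And>x. x \<in> topspace X \<Longrightarrow> x \<notin> W \<Longrightarrow> \<psi> x = 0"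
proof -
  have "closedin X (topspace X - W)" "disjnt K (topspace X - W)"
    using assms by (auto simp: disjnt_def)
  then obtain \<psi> where "continuous_map X (top_of_set {0..1}) \<psi>"
      "\<psi> ` (topspace X - W) \<subseteq> {0::real}" "\<psi> ` K \<subseteq> {1}"
    using Urysohn_completely_regular_compact_closed[of 0 1 X K] assms(1,2) by auto
  then show ?thesis
    using that by (force simp: continuous_map_in_subtopology)
qed

lemma C0_Urysohn_compact:
  assumes "locally_compact_space X" "Hausdorff_space X" "compactin X K"
  obtains \<phi> where "\<phi> \<in> C0 X" "\<And>x. 0 \<le> \<phi> x" "\<And>x. \<phi> x \<le> 1" "\<And>x. x \<in> K \<Longrightarrow> \<phi> x = 1"
proof -
  have "completely_regular_space X"
    using assms locally_compact_regular_imp_completely_regular_space by blast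
  moreover obtain W L where WL: "openin X W" "compactin X L" "closedin X L" "K \<subseteq> W" "W \<subseteq> L"
    using assms locally_compact_space_compact_closed_compact by metis
  ultimately obtain \<psi> where \<psi>: "continuous_map X euclideanreal \<psi>"
      "\<And>x. x \<in> topspace X \<Longrightarrow> 0 \<le> \<psi> x \<and> \<psi> x \<le> 1" "\<And>x. x \<in> K \<Longrightarrow> \<psi> x = 1"
      "\<And>x. x \<in> topspace X \<Longrightarrow> x \<notin> W \<Longrightarrow> \<psi> x = 0"
    using completely_regular_Urysohn_cutoff assms(3) by metis
  define \<phi> where "\<phi> x = (if x \<in> topspace X then \<psi> x else 0)" for x
  have cont: "continuous_map X euclideanreal \<phi>"
    using \<psi>(1) by (rule continuous_map_eq) (simp add: \<phi>_def)
  have "compactin X {x \<in> topspace X. e \<le> \<bar>\<phi> x\<bar>}" if "e > 0" for e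
  proof (rule closed_compactin[OF WL(2)])
    show "{x \<in> topspace X. e \<le> \<bar>\<phi> x\<bar>} \<subseteq> L"
      using \<psi>(4) WL(5) that by (force simp: \<phi>_def)
  qed (rule closedin_abs_ge[OF cont])
  then have "\<phi> \<in> C0 X"
    using cont by (simp add: C0_def \<phi>_def)
  moreover have "x \<in> K \<Longrightarrow> \<phi> x = 1" for x
    using \<psi>(3) compactin_subset_topspace[OF assms(3)] by (auto simp: \<phi>_def)
  ultimately show ?thesis
    using that \<psi>(2) by (simp add: \<phi>_def)
qed

lemma uncountable_meets_dense_countable_Union:
  assumes dense: "X closure_of (\<Union>n. K n) = topspace X"
    and "\<forall>V\<in>F. openin X V" "uncountable F"
  obtains n :: nat where "uncountable {V\<in>F. V \<inter> K n \<noteq> {}}"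
proof -
  have "F \<subseteq> insert {} (\<Union>n. {V\<in>F. V \<inter> K n \<noteq> {}})"
  proof
    fix V assume "V \<in> F"
    then show "V \<in> insert {} (\<Union>n. {V\<in>F. V \<inter> K n \<noteq> {}})"
      using assms(2) dense_intersects_open[THEN iffD1, OF dense, rule_format, of V] by blast
  qed
  moreover have "countable (insert {} (\<Union>n. {V\<in>F. V \<inter> K n \<noteq> {}}))"
    if "\<forall>n. countable {V\<in>F. V \<inter> K n \<noteq> {}}"
    using that by auto
  ultimately have "\<not> (\<forall>n. countable {V\<in>F. V \<inter> K n \<noteq> {}})"
    using assms(3) countable_subset by blast
  with that show ?thesis
    by blast
qed

lemma disjoint_open_family_extend_dense:
  assumes "\<forall>V\<in>F. openin X V" "pairwise disjnt F"
  defines "G \<equiv> insert (topspace X - X closure_of (\<Union>F)) F"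
  shows "\<forall>V\<in>G. openin X V" "pairwise disjnt G" "X closure_of (\<Union>G) = topspace X"
proof -
  have "\<Union>F \<subseteq> topspace X"
    using assms(1) openin_subset by blast
  then have F_closure: "V \<subseteq> X closure_of (\<Union>F)" if "V \<in> F" for V
    using closure_of_subset that by blast
  show "\<forall>V\<in>G. openin X V"
    using assms(1) by (auto simp: G_def)
  show "pairwise disjnt G"
    using assms(2) F_closure by (auto simp: G_def pairwise_insert disjnt_def)
  have "topspace X \<subseteq> X closure_of (topspace X - X closure_of (\<Union>F)) \<union> X closure_of (\<Union>F)"
    using closure_of_subset[of "topspace X - X closure_of (\<Union>F)" X] by auto
  then show "X closure_of (\<Union>G) = topspace X"
    by (simp add: G_def closure_of_subset_topspace subset_antisym)
qed

text \<open>Each point x of \<Union>G is seen by the minorant \<phi> \<psi> with \<psi> an Urysohn bump at x, so an upper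
  bound h of the minorants satisfies \<phi> \<le> h on \<Union>G, hence on its closure.\<close>

lemma C0_is_sup_supported_minorants:
  assumes cr: "completely_regular_space X" and \<phi>: "\<phi> \<in> C0 X" "\<And>x. 0 \<le> \<phi> x"
    and G: "\<forall>W\<in>G. openin X W" "X closure_of (\<Union>G) = topspace X"
  shows "C0_is_sup X {f \<in> C0 X. (\<exists>W\<in>G. \<forall>x\<in>topspace X. x \<notin> W \<longrightarrow> f x = 0) \<and> C0_le X f \<phi>} \<phi>"
    (is "C0_is_sup X ?S \<phi>")
  unfolding C0_is_sup_def
proof (intro conjI ballI impI)
  fix h assume h: "h \<in> C0 X" and upper: "\<forall>f\<in>?S. C0_le X f h"
  define D where "D = {x \<in> topspace X. 0 \<le> h x - \<phi> x}"
  have "continuous_map X euclideanreal (\<lambda>x. h x - \<phi> x)"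
    using h \<phi>(1) by (intro continuous_map_diff) (simp_all add: C0_def)
  then have "closedin X D"
    unfolding D_def continuous_map_upper_lower_semicontinuous_le by blast
  moreover have "\<Union>G \<subseteq> D"
  proof
    fix x assume "x \<in> \<Union>G"
    then obtain W where W: "W \<in> G" "x \<in> W" by blast
    have x: "x \<in> topspace X"
      using W G(1) openin_subset by blast
    obtain \<psi> where \<psi>: "continuous_map X euclideanreal \<psi>"
        "\<And>y. y \<in> topspace X \<Longrightarrow> 0 \<le> \<psi> y \<and> \<psi> y \<le> 1" "\<psi> x = 1"
        "\<And>y. y \<in> topspace X \<Longrightarrow> y \<notin> W \<Longrightarrow> \<psi> y = 0"
      using completely_regular_Urysohn_cutoff[OF cr, of "{x}" W] W G(1) x by auto
    have "(\<lambda>y. \<phi> y * \<psi> y) \<in> ?S"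
      using W \<psi> \<phi> by (auto simp: C0_le_def mult_left_le intro!: C0_mult_bounded)
    then have "C0_le X (\<lambda>y. \<phi> y * \<psi> y) h"
      using upper by blast
    then have "\<phi> x * \<psi> x \<le> h x"
      using x by (simp add: C0_le_def)
    then show "x \<in> D"
      using \<psi>(3) x by (simp add: D_def)
  qed
  ultimately have "X closure_of (\<Union>G) \<subseteq> D"
    by (rule closure_of_minimal[rotated])
  then show "C0_le X \<phi> h"
    using G(2) by (auto simp: C0_le_def D_def)
qed (use \<phi> in auto)

text \<open>The cut-down function \<phi> (1 - \<psi>) bounds every member of T if none of them lives on W.\<close>

lemma C0_is_sup_nonvanishing_on_open:
  assumes cr: "completely_regular_space X" and sup: "C0_is_sup X T \<phi>"
    and \<phi>: "\<And>x. 0 \<le> \<phi> x" and W: "openin X W" "x \<in> W" "\<phi> x > 0"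
  shows "\<exists>f\<in>T. \<exists>y\<in>W. f y \<noteq> 0"
proof (rule ccontr)
  assume vanish: "\<not> ?thesis"
  have x: "x \<in> topspace X"
    using W openin_subset by blast
  obtain \<psi> where \<psi>: "continuous_map X euclideanreal \<psi>"
      "\<And>y. y \<in> topspace X \<Longrightarrow> 0 \<le> \<psi> y \<and> \<psi> y \<le> 1" "\<psi> x = 1"
      "\<And>y. y \<in> topspace X \<Longrightarrow> y \<notin> W \<Longrightarrow> \<psi> y = 0"
    using completely_regular_Urysohn_cutoff[OF cr, of "{x}" W] W x by auto
  define h where "h y = \<phi> y * (1 - \<psi> y)" for y
  have "h \<in> C0 X"
    unfolding h_def using sup \<psi>(1,2)
    by (intro C0_mult_bounded) (auto simp: C0_is_sup_def intro: continuous_intros)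
  moreover have "C0_le X f h" if "f \<in> T" for f
  proof -
    have "C0_le X f \<phi>"
      using sup that by (simp add: C0_is_sup_def)
    moreover have "f y \<le> h y" if "y \<in> topspace X" "C0_le X f \<phi>" for y
    proof (cases "y \<in> W")
      case True
      then show ?thesis
        using vanish \<open>f \<in> T\<close> \<phi> \<psi>(2)[OF \<open>y \<in> topspace X\<close>] by (auto simp: h_def)
    next
      case False
      then show ?thesis
        using that \<psi>(4) by (simp add: C0_le_def h_def)
    qed
    ultimately show ?thesis
      by (simp add: C0_le_def)
  qed
  ultimately have "\<phi> x \<le> h x"
    using sup x by (auto simp: C0_is_sup_def C0_le_def)
  then show False
    using \<psi>(3) W(3) by (simp add: h_def)
qed

lemma countable_members_meeting_supports:
  fixes G :: "'a set set" and T :: "('a \<Rightarrow> 'b::zero) set"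
  assumes G: "pairwise disjnt G" "\<Union>G \<subseteq> topspace X" and "countable T"
    and supp: "\<forall>f\<in>T. \<exists>W\<in>G. \<forall>x\<in>topspace X. x \<notin> W \<longrightarrow> f x = 0"
  shows "countable {W\<in>G. \<exists>f\<in>T. \<exists>y\<in>W. f y \<noteq> 0}"
proof -
  obtain supp_of where supp_of: "\<And>f. f \<in> T \<Longrightarrow> supp_of f \<in> G"
      "\<And>f x. f \<in> T \<Longrightarrow> x \<in> topspace X \<Longrightarrow> x \<notin> supp_of f \<Longrightarrow> f x = 0"
    using bchoice[OF supp[unfolded Bex_def]] by blast
  have "{W\<in>G. \<exists>f\<in>T. \<exists>y\<in>W. f y \<noteq> 0} \<subseteq> supp_of ` T"
  proof clarify
    fix W f y assume W: "W \<in> G" "f \<in> T" "y \<in> W" "f y \<noteq> 0"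
    then have "y \<in> supp_of f"
      using G(2) supp_of(2) by blast
    then have "W = supp_of f"
      using G(1) W supp_of(1) by (meson disjnt_iff pairwiseD)
    then show "W \<in> supp_of ` T"
      using W(2) by blast
  qed
  then show ?thesis
    by (rule countable_subset) (use \<open>countable T\<close> in simp)
qed

lemma countable_sup_property_C0_countable_cozero_members:
  assumes cr: "completely_regular_space X" and csp: "countable_sup_property_C0 X"
    and \<phi>: "\<phi> \<in> C0 X" "\<And>x. 0 \<le> \<phi> x"
    and G: "\<forall>W\<in>G. openin X W" "pairwise disjnt G" "X closure_of (\<Union>G) = topspace X"
  shows "countable {W\<in>G. \<exists>x\<in>W. \<phi> x > 0}"
proof (cases "G = {}")
  case False
  define S where "S = {f \<in> C0 X. (\<exists>W\<in>G. \<forall>x\<in>topspace X. x \<notin> W \<longrightarrow> f x = 0) \<and> C0_le X f \<phi>}"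
  have "C0_is_sup X S \<phi>"
    unfolding S_def by (rule C0_is_sup_supported_minorants[OF cr \<phi> G(1,3)])
  moreover have "S \<subseteq> C0 X"
    unfolding S_def by blast
  moreover have "(\<lambda>x. 0) \<in> S"
    using \<open>G \<noteq> {}\<close> C0_zero \<phi>(2) unfolding S_def C0_le_def by blast
  ultimately obtain T where T: "T \<subseteq> S" "countable T" "C0_is_sup X T \<phi>"
    using csp[unfolded countable_sup_property_C0_def, rule_format, of S \<phi>] by blast
  have "{W\<in>G. \<exists>x\<in>W. \<phi> x > 0} \<subseteq> {W\<in>G. \<exists>f\<in>T. \<exists>y\<in>W. f y \<noteq> 0}"
    using C0_is_sup_nonvanishing_on_open[OF cr T(3) \<phi>(2)] G(1) by blast
  moreover have "countable {W\<in>G. \<exists>f\<in>T. \<exists>y\<in>W. f y \<noteq> 0}"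
  proof (rule countable_members_meeting_supports[OF G(2) _ T(2)])
    show "\<Union>G \<subseteq> topspace X"
      using G(1) openin_subset by blast
    show "\<forall>f\<in>T. \<exists>W\<in>G. \<forall>x\<in>topspace X. x \<notin> W \<longrightarrow> f x = 0"
      using T(1) by (auto simp: S_def)
  qed
  ultimately show ?thesis
    by (rule countable_subset)
qed simp

theorem proposition5p6:
  fixes X :: "'a topology"
  assumes "locally_compact_space X" and "Hausdorff_space X"
    and "\<exists>U. openin X U \<and> X closure_of U = topspace X \<and> sigma_compactin X U"
    and "countable_sup_property_C0 X"
  shows "CCC_space X"
  unfolding CCC_space_def
proof (intro allI impI; elim conjE; rule ccontr)
  fix F assume F: "\<forall>V\<in>F. openin X V" "pairwise disjnt F" and "uncountable F"
  have cr: "completely_regular_space X"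
    using assms(1,2) locally_compact_regular_imp_completely_regular_space by blast
  obtain K :: "nat \<Rightarrow> 'a set" where K: "\<And>n. compactin X (K n)" "X closure_of (\<Union>n. K n) = topspace X"
    using assms(3) unfolding sigma_compactin_def by metis
  obtain n where FK: "uncountable {V\<in>F. V \<inter> K n \<noteq> {}}"
    using uncountable_meets_dense_countable_Union[OF K(2) F(1) \<open>uncountable F\<close>] .
  obtain \<phi> where \<phi>: "\<phi> \<in> C0 X" "\<And>x. 0 \<le> \<phi> x" "\<And>x. x \<in> K n \<Longrightarrow> \<phi> x = 1"
    using C0_Urysohn_compact[OF assms(1,2) K(1)] by metis
  define G where "G = insert (topspace X - X closure_of (\<Union>F)) F"
  have "{V\<in>F. V \<inter> K n \<noteq> {}} \<subseteq> {W\<in>G. \<exists>x\<in>W. \<phi> x > 0}"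
    using \<phi>(3) by (force simp: G_def)
  moreover have "countable {W\<in>G. \<exists>x\<in>W. \<phi> x > 0}"
    using countable_sup_property_C0_countable_cozero_members[OF cr assms(4) \<phi>(1,2)]
      disjoint_open_family_extend_dense[OF F, folded G_def] by blast
  ultimately have "countable {V\<in>F. V \<inter> K n \<noteq> {}}"
    by (rule countable_subset)
  with FK show False
    by contradiction
qed

end
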